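(* Let $k\ge 3$ and let $w$ be a word over $\{a,b\}$. Let $p,q\in\{u,v\}$ be two consecutive, non-overlapping occurrences in $w$ (with $p$ occurring before $q$), and let $pxq$ be the corresponding factor of $w$, where $|x|\ge 0$. Let $F_p,F_q\subseteq\{0,\dots,k-1\}$ be the sets of forbidden local positions in $p$ and $q$ respectively. Then $$F_p\subseteq\{(j+|x|)\bmod k \mid j\in F_q\}\cup\{0\}.$$
   Context: $\Sigma=\{a,b\}$. For $k\ge 3$, $S_k=\left(\Sigma^k\setminus\{ba^{k-1},b^{k-1}a\}\right)\cup\left(\Sigma^{k-1}\setminus\{a^{k-1},b^{k-1}\}\right)$, $u=ba^{k-1}$, $v=b^{k-1}a$. $\mathit{Pref}(S^* )$ denotes the set of all prefixes of words in $S^*$. For $w=w_1\cdots w_n$, $w[i..j]=w_i\cdots w_j$ (empty if $i>j$). A position $j$, $0\le j\le n-1$, is forbidden in $w$ if $w[j+1..n]\notin\mathit{Pref}(S_k^* )$. An occurrence of $p\in\{u,v\}$ in $w$ is an index $s$ with $w[s+1..s+k]=p$; local position $i\in\{0,\dots,k-1\}$ of the occurrence is the position $s+i$ of $w$, and it is forbidden in the occurrence if $s+i$ is forbidden in $w$. Two occurrences of words from $\{u,v\}$ starting at $s<t$ overlap if $t<s+k$; they are consecutive if either they overlap or they are the only occurrences of $u$ or $v$ lying inside the factor $w[s+1..t+k]$. *)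

theory Defs
  imports Main
begin

datatype sym = a | b

type_synonym word = "sym list"

definition u :: "nat \<Rightarrow> word" where
  "u k = [b] @ replicate (k - 1) a"

definition v :: "nat \<Rightarrow> word" where
  "v k = replicate (k - 1) b @ [a]"

definition S :: "nat \<Rightarrow> word set" where
  "S k = ({w. length w = k} - {u k, v k})
       \<union> ({w. length w = k - 1} - {replicate (k - 1) a, replicate (k - 1) b})"

definition PrefStar :: "word set \<Rightarrow> word set" where
  "PrefStar L = {y. \<exists>z ws. set ws \<subseteq> L \<and> y @ z = concat ws}"

text \<open>Position j (0 \<le> j \<le> n-1) is forbidden in w if w[j+1..n] = drop j w is not in Pref(S_k^*).\<close>
definition forbidden :: "nat \<Rightarrow> word \<Rightarrow> nat \<Rightarrow> bool" where
  "forbidden k w j \<longleftrightarrow> j < length w \<and> drop j w \<notin> PrefStar (S k)"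

text \<open>An occurrence of p in w at index s: w[s+1..s+k] = p (k = length p).\<close>
definition occ :: "word \<Rightarrow> word \<Rightarrow> nat \<Rightarrow> bool" where
  "occ w p s \<longleftrightarrow> s + length p \<le> length w \<and> take (length p) (drop s w) = p"

definition occ_uv :: "nat \<Rightarrow> word \<Rightarrow> nat \<Rightarrow> bool" where
  "occ_uv k w s \<longleftrightarrow> occ w (u k) s \<or> occ w (v k) s"

definition consecutive :: "nat \<Rightarrow> word \<Rightarrow> nat \<Rightarrow> nat \<Rightarrow> bool" where
  "consecutive k w s t \<longleftrightarrow> s < t \<and> occ_uv k w s \<and> occ_uv k w t \<and>
     (t < s + k \<or> (\<forall>r. occ_uv k w r \<and> s \<le> r \<and> r + k \<le> t + k \<longrightarrow> r = s \<or> r = t))"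

definition forbidden_local :: "nat \<Rightarrow> word \<Rightarrow> nat \<Rightarrow> nat set" where
  "forbidden_local k w s = {i. i < k \<and> forbidden k w (s + i)}"

end

theory Submission
  imports Defs
begin

(* Let i be a forbidden local position of the occurrence p at s, i > 0,
   and let L = |x|, so that q starts at t = s + k + L.  Choose the local position j < k of q
   with (j + L) mod k = i; then t + j = s + i + m*k for some m.  Cut the factor
   w[s+i+1 .. t+j] into m blocks of length k.  None of these blocks is u or v: such a block
   would be an occurrence of u or v strictly between s (it starts after s, as i > 0) and t
   (it ends before t + j < t + k), contradicting that p and q are consecutive.  Every block
   of length k other than u and v lies in S_k, and prepending a word of S_k preserves
   membership in Pref(S_k^* ).  Hence if t + j were not forbidden, neither would be s + i.
   So i = (j + L) mod k with j forbidden in q. *)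

lemma length_u: "k \<ge> 1 \<Longrightarrow> length (u k) = k"
  by (simp add: u_def)

lemma length_v: "k \<ge> 1 \<Longrightarrow> length (v k) = k"
  by (simp add: v_def)

lemma PrefStar_prepend:
  assumes "z \<in> L" and "y \<in> PrefStar L"
  shows "z @ y \<in> PrefStar L"
proof -
  obtain y' ws where "set ws \<subseteq> L" and "y @ y' = concat ws"
    using assms(2) unfolding PrefStar_def by blast
  then have "set (z # ws) \<subseteq> L" and "(z @ y) @ y' = concat (z # ws)"
    using assms(1) by auto
  then show ?thesis unfolding PrefStar_def by blast
qed

lemma PrefStar_blocks:
  assumes "\<forall>l<m. take k (drop (pos + l * k) w) \<in> L"
    and "drop (pos + m * k) w \<in> PrefStar L"
  shows "drop pos w \<in> PrefStar L"
  using assms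
proof (induction m arbitrary: pos)
  case 0
  then show ?case by simp
next
  case (Suc m)
  have "\<forall>l<m. take k (drop ((pos + k) + l * k) w) \<in> L"
    using Suc.prems(1) by (auto simp: add.assoc dest: spec[of _ "Suc _"])
  moreover have "drop ((pos + k) + m * k) w \<in> PrefStar L"
    using Suc.prems(2) by (simp add: add.assoc)
  ultimately have tail: "drop (pos + k) w \<in> PrefStar L"
    by (rule Suc.IH)
  have head: "take k (drop pos w) \<in> L"
    using Suc.prems(1) by (metis add_0_right mult_zero_left zero_less_Suc)
  have "drop pos w = take k (drop pos w) @ drop (pos + k) w"
    by (metis append_take_drop_id drop_drop add.commute)
  then show ?case
    using PrefStar_prepend[OF head tail] by simp
qed

lemma block_in_S:
  assumes "length z = k" and "z \<notin> {u k, v k}"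
  shows "z \<in> S k"
  using assms unfolding S_def by auto

lemma consecutive_no_occ_between:
  assumes "consecutive k w s t" and "s + k \<le> t"
    and "occ_uv k w r" and "s < r" and "r < t"
  shows False
  using assms unfolding consecutive_def by force

lemma block_occ_uv:
  assumes "k \<ge> 1" and "r + k \<le> length w" and "take k (drop r w) \<in> {u k, v k}"
  shows "occ_uv k w r"
  using assms length_u[OF assms(1)] length_v[OF assms(1)]
  unfolding occ_uv_def occ_def by auto

lemma forbidden_transfer:
  assumes k: "k \<ge> 1"
    and cons: "consecutive k w s t" and nonoverlap: "s + k \<le> t"
    and end_t: "t + k \<le> length w"
    and i: "0 < i" and j: "j < k" and pos: "t + j = s + i + m * k"
    and forb: "forbidden k w (s + i)"
  shows "forbidden k w (t + j)"
proof (rule ccontr)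
  assume "\<not> forbidden k w (t + j)"
  then have suffix: "drop (s + i + m * k) w \<in> PrefStar (S k)"
    using j end_t pos by (simp add: forbidden_def)
  have "take k (drop (s + i + l * k) w) \<in> S k" if "l < m" for l
  proof (rule block_in_S)
    define r where "r = s + i + l * k"
    have "Suc l * k \<le> m * k"
      using that by (intro mult_le_mono1) simp
    then have r_end: "r + k \<le> t + j"
      using pos by (simp add: r_def)
    then show "length (take k (drop r w)) = k"
      using j end_t by simp
    show "take k (drop r w) \<notin> {u k, v k}"
    proof
      assume "take k (drop r w) \<in> {u k, v k}"
      then have "occ_uv k w r"
        using block_occ_uv[OF k] r_end j end_t by simp
      moreover have "s < r" and "r < t"
        using i r_end j by (auto simp: r_def)
      ultimately show False
        using consecutive_no_occ_between[OF cons nonoverlap] by blast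
    qed
  qed
  then have "drop (s + i) w \<in> PrefStar (S k)"
    using PrefStar_blocks suffix by blast
  then show False
    using forb by (simp add: forbidden_def)
qed

lemma residue_shift:
  fixes i k L :: nat
  assumes "i < k"
  obtains j m where "j < k" and "(j + L) mod k = i" and "k + L + j = i + m * k"
proof -
  define j where "j = (i + k - L mod k) mod k"
  have "(j + L) mod k = (L + (i + k - L mod k)) mod k"
    by (simp add: j_def mod_add_right_eq add.commute)
  also have "L + (i + k - L mod k) = (L div k) * k + i + k"
    using mod_less_divisor[of k L] assms div_mult_mod_eq[of L k] by linarith
  also have "((L div k) * k + i + k) mod k = i"
    using assms by simp
  finally have res: "(j + L) mod k = i" .
  then have "k + L + j = i + ((j + L) div k + 1) * k"
    using div_mult_mod_eq[of "j + L" k] by (simp add: algebra_simps)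
  moreover have "j < k"
    using assms by (simp add: j_def)
  ultimately show thesis
    using that res by blast
qed

theorem lemma3:
  fixes k :: nat and w p q x :: word and s t :: nat
  assumes "k \<ge> 3"
    and "p \<in> {u k, v k}" and "q \<in> {u k, v k}"
    and "occ w p s" and "occ w q t" and "s < t"
    and "consecutive k w s t"
    and "s + k \<le> t"
    and "x = take (t - (s + k)) (drop (s + k) w)"
  shows "forbidden_local k w s
           \<subseteq> {(j + length x) mod k | j. j \<in> forbidden_local k w t} \<union> {0}"
proof
  fix i assume "i \<in> forbidden_local k w s"
  then have "i < k" and forb: "forbidden k w (s + i)"
    by (auto simp: forbidden_local_def)
  have k: "k \<ge> 1" using assms(1) by simp
  have end_t: "t + k \<le> length w"
    using assms(3,5) length_u[OF k] length_v[OF k] by (auto simp: occ_def)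
  have len_x: "t = s + k + length x"
    using assms(8,9) end_t by simp
  obtain j m where j: "j < k" and res: "(j + length x) mod k = i"
    and pos: "k + length x + j = i + m * k"
    using residue_shift[OF \<open>i < k\<close>] by blast
  show "i \<in> {(j + length x) mod k | j. j \<in> forbidden_local k w t} \<union> {0}"
  proof (cases "i = 0")
    case False
    have "t + j = s + i + m * k"
      using pos len_x by simp
    with False have "forbidden k w (t + j)"
      using forbidden_transfer[OF k assms(7,8) end_t _ j _ forb, of m] by simp
    then show ?thesis
      using j res by (auto simp: forbidden_local_def)
  qed simp
qed

end
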